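(* Let $\mathcal F=\{F_1,\dots,F_k\}$, $\mathcal I_0=\{0,1\}^k$, $\mathcal I=\mathcal I_0\setminus\{\boldsymbol 0\}$, $I=2^k-1$, and let $\mathcal F_{asc}$ be a nonempty ascending class of nonempty subsets of $\mathcal F$, with $\mathcal F_{des}=2^{\mathcal F}\setminus\mathcal F_{asc}\setminus\{\varnothing\}$. Let $\mathbf A$ be the $|\mathcal F_{des}|\times I$ matrix with entry $1$ in row $W\in\mathcal F_{des}$, column $\boldsymbol i\in\mathcal I$ if $W\subseteq\phi(\boldsymbol i)$ and $0$ otherwise, and let $$\mathbf A_1=\begin{pmatrix}\boldsymbol 1^\top\\ \mathbf A\end{pmatrix},\qquad \mathbf A_0=\begin{pmatrix}1&\boldsymbol 1^\top\\ \boldsymbol 0&\mathbf A\end{pmatrix},$$ of sizes $(|\mathcal F_{des}|+1)\times I$ and $(|\mathcal F_{des}|+1)\times(I+1)$, where the first column of $\mathbf A_0$ corresponds to the zero cell $\boldsymbol 0$. Then: (i) $HAS(\mathcal F_{asc})$ and $QLL(\mathcal F_{asc})$ are the relational models on $\mathcal I$ generated by $\mathbf A$ and $\mathbf A_1$, respectively; (ii) $LL(\mathcal F_{asc})$ is the relational model on $\mathcal I_0$ generated by $\mathbf A_0$; (iii) $HAS(\mathcal F_{asc})$ and $LL(\mathcal F_{asc})$ each have $|\mathcal F_{asc}|$ degrees of freedom, and $QLL(\mathcal F_{asc})$ has $|\mathcal F_{asc}|-1$ degrees of freedom.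
   Context: For a cell $\boldsymbol i$, $\phi(\boldsymbol i)$ is the set of features whose coordinate in $\boldsymbol i$ is $1$ ($\phi(\boldsymbol 0)=\varnothing$). An ascending class is closed under supersets within $\mathcal F$. The relational model on a finite sample space $\mathcal T$ generated by a 0–1 matrix $\mathbf M$ with columns indexed by $\mathcal T$ is the set of strictly positive probability distributions $\boldsymbol p$ on $\mathcal T$ with $\log\boldsymbol p=\mathbf M^\top\boldsymbol\beta$ for some $\boldsymbol\beta$; its number of degrees of freedom is $|\mathcal T|-\mathrm{rank}(\mathbf M)$. $HAS(\mathcal F_{asc})$: strictly positive distributions $\boldsymbol p$ on $\mathcal I$ such that, writing $\log p(\boldsymbol i)=\sum_{\varnothing\neq V\subseteq\phi(\boldsymbol i)}\beta_V$ (a unique representation), $\beta_V=0$ for all $V\in\mathcal F_{asc}$ (equivalently, all conditional Aitchison–Silvey ratios $\mathrm{CASR}(V\mid\mathcal F\setminus V=\mathbf 0)=\prod_{\varnothing\ne U\subseteq V,|U|\equiv|V|(2)}p(U)/\prod_{\varnothing\ne U\subseteq V,|U|\not\equiv|V|(2)}p(U)$ equal $1$ for $V\in\mathcal F_{asc}$). $LL(\mathcal F_{asc})$: strictly positive distributions $\boldsymbol p$ on $\mathcal I_0$ such that, writing $\log p(\boldsymbol i)=\sum_{V\subseteq\phi(\boldsymbol i)}\beta_V$ ($V$ ranging over all subsets including $\varnothing$), $\beta_V=0$ for all $V\in\mathcal F_{asc}$ (the hierarchical log-linear model). $QLL(\mathcal F_{asc})$: the set of distributions $\boldsymbol\pi$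 on $\mathcal I$ of the form $\pi(\boldsymbol i)=p(\boldsymbol i)/\sum_{\boldsymbol j\in\mathcal I}p(\boldsymbol j)$ for some $\boldsymbol p\in LL(\mathcal F_{asc})$. *)

theory Defs
  imports Complex_Main "HOL-Library.Function_Algebras"
begin

text \<open>Cells of the table: a cell i in {0,1}^k is identified with the set
  phi(i) of features (indices in {0..<k}) whose coordinate is 1.
  Distributions on a finite sample space T are functions vanishing outside T.\<close>

definition features :: "nat \<Rightarrow> nat set" where
  "features k = {0..<k}"

definition cells0 :: "nat \<Rightarrow> nat set set" where
  "cells0 k = Pow (features k)"

definition cells :: "nat \<Rightarrow> nat set set" where
  "cells k = Pow (features k) - {{}}"

definition ascending_class :: "nat \<Rightarrow> nat set set \<Rightarrow> bool" where
  "ascending_class k Fa \<longleftrightarrow> Fa \<subseteq> Pow (features k) \<and>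
     (\<forall>V\<in>Fa. \<forall>W. V \<subseteq> W \<and> W \<subseteq> features k \<longrightarrow> W \<in> Fa)"

definition Fdes :: "nat \<Rightarrow> nat set set \<Rightarrow> nat set set" where
  "Fdes k Fa = Pow (features k) - Fa - {{}}"

definition pos_dist :: "'c set \<Rightarrow> ('c \<Rightarrow> real) \<Rightarrow> bool" where
  "pos_dist T p \<longleftrightarrow> (\<forall>t\<in>T. p t > 0) \<and> (\<forall>t. t \<notin> T \<longrightarrow> p t = 0) \<and> sum p T = 1"

definition relational_model :: "'c set \<Rightarrow> 'r set \<Rightarrow> ('r \<Rightarrow> 'c \<Rightarrow> real) \<Rightarrow> ('c \<Rightarrow> real) set" where
  "relational_model T R M = {p. pos_dist T p \<and>
      (\<exists>\<beta> :: 'r \<Rightarrow> real. \<forall>t\<in>T. ln (p t) = (\<Sum>r\<in>R. M r t * \<beta> r))}"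

definition mat_rank :: "'c set \<Rightarrow> 'r set \<Rightarrow> ('r \<Rightarrow> 'c \<Rightarrow> real) \<Rightarrow> nat" where
  "mat_rank T R M = vector_space.dim (\<lambda>(c::real) (f::'c \<Rightarrow> real). (\<lambda>x. c * f x))
      ((\<lambda>r. \<lambda>t. if t \<in> T then M r t else 0) ` R)"

definition degrees_of_freedom :: "'c set \<Rightarrow> 'r set \<Rightarrow> ('r \<Rightarrow> 'c \<Rightarrow> real) \<Rightarrow> nat" where
  "degrees_of_freedom T R M = card T - mat_rank T R M"

text \<open>The matrices A, A_1, A_0. Rows of A_1, A_0: None = the first row, Some W for W in F_des.\<close>
definition matA :: "nat set \<Rightarrow> nat set \<Rightarrow> real" where
  "matA W i = (if W \<subseteq> i then 1 else 0)"

definition matA1 :: "nat set option \<Rightarrow> nat set \<Rightarrow> real" where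
  "matA1 r i = (case r of None \<Rightarrow> 1 | Some W \<Rightarrow> matA W i)"

definition matA0 :: "nat set option \<Rightarrow> nat set \<Rightarrow> real" where
  "matA0 r i = (case r of None \<Rightarrow> 1 | Some W \<Rightarrow> (if i = {} then 0 else matA W i))"

definition rowsA :: "nat \<Rightarrow> nat set set \<Rightarrow> nat set set" where
  "rowsA k Fa = Fdes k Fa"

definition rowsA1 :: "nat \<Rightarrow> nat set set \<Rightarrow> nat set option set" where
  "rowsA1 k Fa = insert None (Some ` Fdes k Fa)"

definition HAS :: "nat \<Rightarrow> nat set set \<Rightarrow> (nat set \<Rightarrow> real) set" where
  "HAS k Fa = {p. pos_dist (cells k) p \<and>
     (\<exists>\<beta> :: nat set \<Rightarrow> real.
        (\<forall>i\<in>cells k. ln (p i) = (\<Sum>V\<in>Pow i - {{}}. \<beta> V)) \<and>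
        (\<forall>V\<in>Fa. \<beta> V = 0))}"

definition LL :: "nat \<Rightarrow> nat set set \<Rightarrow> (nat set \<Rightarrow> real) set" where
  "LL k Fa = {p. pos_dist (cells0 k) p \<and>
     (\<exists>\<beta> :: nat set \<Rightarrow> real.
        (\<forall>i\<in>cells0 k. ln (p i) = (\<Sum>V\<in>Pow i. \<beta> V)) \<and>
        (\<forall>V\<in>Fa. \<beta> V = 0))}"

definition QLL :: "nat \<Rightarrow> nat set set \<Rightarrow> (nat set \<Rightarrow> real) set" where
  "QLL k Fa = {\<pi>. \<exists>p\<in>LL k Fa.
      \<forall>i. \<pi> i = (if i \<in> cells k then p i / (\<Sum>j\<in>cells k. p j) else 0)}"

end

theory Submission
  imports Defs
begin

text \<open>The rows of \<open>A\<close> are the zeta vectors \<open>i \<mapsto> [W \<subseteq> i]\<close>. By Moebius inversion, if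
  \<open>c + \<Sum>\<^sub>W b\<^sub>W [W \<subseteq> i]\<close> vanishes on every nonempty cell, then \<open>b\<^sub>W = (-1)\<^bsup>|W|\<^esup> c\<close> for
  every nonempty \<open>W\<close>, where \<open>b\<^sub>W = 0\<close> for \<open>W\<close> outside the row set. Hence \<open>A\<close> and \<open>A\<^sub>0\<close> (where the zero cell
  gives \<open>c = 0\<close>) have full row rank, and so has \<open>A\<^sub>1\<close>, because the full feature set lies in the
  ascending class and its forced coefficient \<open>0 = \<plusminus>c\<close> again gives \<open>c = 0\<close>. Counting
  \<open>2\<^sup>k = |F\<^sub>a\<^sub>s\<^sub>c| + |F\<^sub>d\<^sub>e\<^sub>s| + 1\<close> yields the degrees of freedom. The model identities are
  reparametrisations: the coefficients \<open>\<beta>\<^sub>V\<close> with \<open>V \<notin> F\<^sub>a\<^sub>s\<^sub>c\<close> are exactly the relational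
  coefficients, and the renormalisation turning \<open>LL\<close> into \<open>QLL\<close> is absorbed by the all-ones row
  of \<open>A\<^sub>1\<close>.\<close>

lemma sum_fun_apply: "(\<Sum>a\<in>A. f a) x = (\<Sum>a\<in>A. f a x)"
  by (induction A rule: infinite_finite_induct) auto

lemma mat_rank_eq_card_rows:
  fixes M :: "'r \<Rightarrow> 'c \<Rightarrow> real"
  assumes "finite R"
    and rows_independent: "\<And>b. \<forall>t\<in>T. (\<Sum>r\<in>R. M r t * b r) = 0 \<Longrightarrow> \<forall>r\<in>R. b r = 0"
  shows "mat_rank T R M = card R"
proof -
  interpret vector_space "\<lambda>(c::real) (f::'c \<Rightarrow> real) x. c * f x"
    by unfold_locales (auto simp: algebra_simps)
  define row where "row r = (\<lambda>t. if t \<in> T then M r t else 0)" for r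
  have combination_zero: "\<forall>r\<in>R. b r = 0" if "(\<Sum>r\<in>R. (\<lambda>x. b r * row r x)) = 0" for b
  proof (rule rows_independent, rule ballI)
    fix t assume "t \<in> T"
    then show "(\<Sum>r\<in>R. M r t * b r) = 0"
      using fun_cong[OF that, of t] by (simp add: sum_fun_apply row_def mult.commute)
  qed
  \<comment> \<open>\<open>mat_rank\<close> counts the set of row vectors, so distinct rows must give distinct vectors.\<close>
  have "inj_on row R"
  proof (rule inj_onI, rule ccontr)
    fix r1 r2 assume r: "r1 \<in> R" "r2 \<in> R" "row r1 = row r2" "r1 \<noteq> r2"
    define b where "b r = (if r = r1 then 1 else if r = r2 then -1 else 0 :: real)" for r
    have "(\<Sum>r\<in>R. (\<lambda>x. b r * row r x)) = (\<Sum>r\<in>{r1, r2}. (\<lambda>x. b r * row r x))"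
      using \<open>finite R\<close> r by (intro sum.mono_neutral_right) (auto simp: b_def)
    also have "\<dots> = 0"
      using r by (simp add: b_def fun_eq_iff)
    finally show False
      using combination_zero[of b] r by (auto simp: b_def)
  qed
  moreover have "independent (row ` R)"
  proof (rule independent_if_scalars_zero)
    fix u v assume "(\<Sum>x\<in>row ` R. (\<lambda>y. u x * x y)) = 0" "v \<in> row ` R"
    then show "u v = 0"
      using combination_zero[of "u \<circ> row"] \<open>inj_on row R\<close> by (auto simp: sum.reindex)
  qed (use \<open>finite R\<close> in simp)
  ultimately show ?thesis
    by (simp add: mat_rank_def dim_eq_card_independent card_image flip: row_def)
qed

lemma sum_Pow_vanishing_off_empty:
  fixes \<beta> :: "'a set \<Rightarrow> 'b::ring_1"
  assumes "finite S" and vanishing: "\<And>T. T \<subseteq> S \<Longrightarrow> T \<noteq> {} \<Longrightarrow> sum \<beta> (Pow T) = 0"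
  shows "\<beta> S = (-1) ^ card S * \<beta> {}"
proof -
  have "\<beta> S = (\<Sum>T\<in>Pow S. (-1) ^ (card S - card T) * sum \<beta> (Pow T))"
    by (rule inclusion_exclusion_mobius[where g = "\<lambda>T. sum \<beta> (Pow T)"]) (simp_all add: \<open>finite S\<close>)
  also have "\<dots> = (\<Sum>T\<in>{{}}. (-1) ^ (card S - card T) * sum \<beta> (Pow T))"
    using \<open>finite S\<close> vanishing by (intro sum.mono_neutral_right) auto
  finally show ?thesis by simp
qed

lemma sum_matA: "finite R \<Longrightarrow> (\<Sum>W\<in>R. matA W i * b W) = (\<Sum>W\<in>{W\<in>R. W \<subseteq> i}. b W)"
  by (auto simp: sum.inter_filter matA_def intro!: sum.cong)

lemma matA_combination_vanishing:
  fixes b :: "nat set \<Rightarrow> real"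
  assumes "finite F" "R \<subseteq> Pow F - {{}}"
    and vanishing: "\<And>i. i \<subseteq> F \<Longrightarrow> i \<noteq> {} \<Longrightarrow> c + (\<Sum>W\<in>R. matA W i * b W) = 0"
    and "W \<subseteq> F" "W \<noteq> {}"
  shows "(if W \<in> R then b W else 0) = (-1) ^ card W * c"
proof -
  define \<beta> where "\<beta> V = (if V = {} then c else if V \<in> R then b V else 0)" for V
  have finR: "finite R"
    using assms(1,2) by (meson finite_Diff finite_Pow_iff finite_subset)
  have "sum \<beta> (Pow i) = c + (\<Sum>W\<in>R. matA W i * b W)" if "i \<subseteq> F" for i
  proof -
    have "sum \<beta> (Pow i) = \<beta> {} + sum \<beta> (Pow i - {{}})"
      using that \<open>finite F\<close> by (subst sum.remove[of _ "{}"]) (auto intro: finite_subset)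
    also have "sum \<beta> (Pow i - {{}}) = (\<Sum>W\<in>{W\<in>R. W \<subseteq> i}. b W)"
      using that assms(1,2) by (intro sum.mono_neutral_cong_right) (auto simp: \<beta>_def intro: finite_subset)
    finally show ?thesis
      by (simp add: sum_matA[OF finR] \<beta>_def)
  qed
  then have "\<beta> W = (-1) ^ card W * \<beta> {}"
    using assms(1,4) vanishing by (intro sum_Pow_vanishing_off_empty) (auto intro: finite_subset)
  with \<open>W \<noteq> {}\<close> show ?thesis
    by (simp add: \<beta>_def)
qed

lemma finite_features [simp]: "finite (features k)"
  by (simp add: features_def)

lemma finite_cells [simp]: "finite (cells k)"
  by (simp add: cells_def)

lemma finite_cells0 [simp]: "finite (cells0 k)"
  by (simp add: cells0_def)

lemma finite_Fdes [simp]: "finite (Fdes k Fa)"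
  by (simp add: Fdes_def)

lemma card_cells0: "card (cells0 k) = 2 ^ k"
  by (simp add: cells0_def card_Pow features_def)

lemma card_cells: "card (cells k) = 2 ^ k - 1"
  by (simp add: cells_def card_Pow features_def)

lemma cells_subset_cells0: "cells k \<subseteq> cells0 k"
  by (auto simp: cells_def cells0_def)

lemma Fdes_memD: "W \<in> Fdes k Fa \<Longrightarrow> W \<notin> Fa \<and> W \<noteq> {}"
  by (simp add: Fdes_def)

lemma sum_rowsA1: "(\<Sum>r\<in>rowsA1 k Fa. g r) = g None + (\<Sum>W\<in>Fdes k Fa. g (Some W))"
  by (simp add: rowsA1_def sum.reindex)

lemma card_rowsA1: "card (rowsA1 k Fa) = card (Fdes k Fa) + 1"
  by (simp add: rowsA1_def card_image)

lemma matA0_Some: "W \<noteq> {} \<Longrightarrow> matA0 (Some W) i = matA W i"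
  by (auto simp: matA0_def matA_def)

lemma matA0_eq_matA1: "i \<noteq> {} \<Longrightarrow> matA0 r i = matA1 r i"
  by (simp add: matA0_def matA1_def split: option.split)

lemma card_Fa_add_card_Fdes:
  assumes "Fa \<subseteq> Pow (features k)" "{} \<notin> Fa"
  shows "card Fa + card (Fdes k Fa) + 1 = 2 ^ k"
proof -
  have "finite Fa"
    using assms(1) by (rule finite_subset) simp
  have "Fa \<union> insert {} (Fdes k Fa) = Pow (features k)"
    using assms(1) by (auto simp: Fdes_def)
  then have "2 ^ k = card (Fa \<union> insert {} (Fdes k Fa))"
    by (simp add: card_Pow features_def)
  also have "\<dots> = card Fa + card (insert {} (Fdes k Fa))"
    using \<open>finite Fa\<close> assms(2) by (intro card_Un_disjoint) (auto simp: Fdes_def)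
  also have "card (insert {} (Fdes k Fa)) = card (Fdes k Fa) + 1"
    by (subst card_insert_disjoint) (auto simp: Fdes_def)
  finally show ?thesis
    by simp
qed

lemma features_mem_ascending_class:
  assumes "ascending_class k Fa" "Fa \<noteq> {}"
  shows "features k \<in> Fa"
  using assms unfolding ascending_class_def by blast

lemma mat_rank_matA: "mat_rank (cells k) (rowsA k Fa) matA = card (Fdes k Fa)"
  unfolding rowsA_def
proof (rule mat_rank_eq_card_rows)
  fix b assume "\<forall>t\<in>cells k. (\<Sum>W\<in>Fdes k Fa. matA W t * b W) = 0"
  then have "(if W \<in> Fdes k Fa then b W else 0) = (-1) ^ card W * 0" if "W \<in> Fdes k Fa" for W
    using that by (intro matA_combination_vanishing[where F = "features k"]) (auto simp: cells_def Fdes_def)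
  then show "\<forall>W\<in>Fdes k Fa. b W = 0"
    by auto
qed simp

lemma mat_rank_matA0: "mat_rank (cells0 k) (rowsA1 k Fa) matA0 = card (Fdes k Fa) + 1"
proof (subst card_rowsA1[symmetric], rule mat_rank_eq_card_rows)
  fix b assume "\<forall>t\<in>cells0 k. (\<Sum>r\<in>rowsA1 k Fa. matA0 r t * b r) = 0"
  then have vanishing: "b None + (\<Sum>W\<in>Fdes k Fa. matA W t * b (Some W)) = 0" if "t \<in> cells0 k" for t
    using that by (simp add: sum_rowsA1 matA0_Some Fdes_def matA0_def[of None])
  have "{} \<in> cells0 k"
    by (simp add: cells0_def)
  from vanishing[OF this] have "b None = 0"
    by (simp add: sum_matA Fdes_def)
  have "(if W \<in> Fdes k Fa then b (Some W) else 0) = (-1) ^ card W * b None" if "W \<in> Fdes k Fa" for W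
    using that vanishing
    by (intro matA_combination_vanishing[where F = "features k"]) (auto simp: cells0_def Fdes_def)
  with \<open>b None = 0\<close> show "\<forall>r\<in>rowsA1 k Fa. b r = 0"
    by (auto simp: rowsA1_def)
qed (simp add: rowsA1_def)

lemma mat_rank_matA1:
  assumes "features k \<in> Fa" "{} \<notin> Fa"
  shows "mat_rank (cells k) (rowsA1 k Fa) matA1 = card (Fdes k Fa) + 1"
proof (subst card_rowsA1[symmetric], rule mat_rank_eq_card_rows)
  fix b assume "\<forall>t\<in>cells k. (\<Sum>r\<in>rowsA1 k Fa. matA1 r t * b r) = 0"
  then have vanishing: "b None + (\<Sum>W\<in>Fdes k Fa. matA W t * b (Some W)) = 0" if "t \<in> cells k" for t
    using that by (simp add: sum_rowsA1 matA1_def)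
  have coefficients: "(if W \<in> Fdes k Fa then b (Some W) else 0) = (-1) ^ card W * b None"
    if "W \<subseteq> features k" "W \<noteq> {}" for W
    using that vanishing
    by (intro matA_combination_vanishing[where F = "features k"]) (auto simp: cells_def Fdes_def)
  have "features k \<notin> Fdes k Fa" "features k \<noteq> {}"
    using assms by (auto simp: Fdes_def)
  then have "b None = 0"
    using coefficients[of "features k"] by simp
  have "b (Some W) = 0" if "W \<in> Fdes k Fa" for W
    using coefficients[of W] that \<open>b None = 0\<close> by (auto simp: Fdes_def)
  with \<open>b None = 0\<close> show "\<forall>r\<in>rowsA1 k Fa. b r = 0"
    by (auto simp: rowsA1_def)
qed (simp add: rowsA1_def)

definition normalize_on :: "'c set \<Rightarrow> ('c \<Rightarrow> real) \<Rightarrow> 'c \<Rightarrow> real" where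
  "normalize_on T q t = (if t \<in> T then q t / sum q T else 0)"

lemma pos_dist_normalize_on:
  assumes "finite T" "T \<noteq> {}" "\<forall>t\<in>T. q t > 0"
  shows "pos_dist T (normalize_on T q)"
proof -
  have "sum q T > 0"
    using assms by (intro sum_pos) auto
  then show ?thesis
    using assms by (simp add: pos_dist_def normalize_on_def sum_divide_distrib[symmetric])
qed

lemma normalize_on_pos_dist: "pos_dist T p \<Longrightarrow> normalize_on T p = p"
  by (auto simp: pos_dist_def normalize_on_def fun_eq_iff)

lemma normalize_on_cong: "(\<And>t. t \<in> T \<Longrightarrow> p t = q t) \<Longrightarrow> normalize_on T p = normalize_on T q"
  by (simp add: normalize_on_def fun_eq_iff cong: sum.cong)

lemma normalize_on_normalize_on:
  assumes "S \<subseteq> T" "sum q T \<noteq> 0"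
  shows "normalize_on S (normalize_on T q) = normalize_on S q"
proof -
  have "sum (normalize_on T q) S = sum q S / sum q T"
    using assms(1) by (auto simp: normalize_on_def sum_divide_distrib intro!: sum.cong)
  then show ?thesis
    using assms by (auto simp: normalize_on_def fun_eq_iff)
qed

lemma normalize_on_in_relational_model:
  assumes "finite T" "T \<noteq> {}" "finite R" "\<rho> \<in> R" "\<forall>t\<in>T. M \<rho> t = 1"
    and "\<forall>t\<in>T. q t > 0" and log_linear: "\<forall>t\<in>T. ln (q t) = (\<Sum>r\<in>R. M r t * \<beta> r)"
  shows "normalize_on T q \<in> relational_model T R M"
proof -
  define Z where "Z = sum q T"
  have "Z > 0"
    unfolding Z_def using assms by (intro sum_pos) auto
  define \<beta>' where "\<beta>' r = \<beta> r - (if r = \<rho> then ln Z else 0)" for r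
  have "ln (normalize_on T q t) = (\<Sum>r\<in>R. M r t * \<beta>' r)" if "t \<in> T" for t
  proof -
    have "q t > 0"
      using that assms by blast
    have "M r t * \<beta>' r = M r t * \<beta> r - (if r = \<rho> then M r t * ln Z else 0)" for r
      by (simp add: \<beta>'_def algebra_simps)
    then have "(\<Sum>r\<in>R. M r t * \<beta>' r) = (\<Sum>r\<in>R. M r t * \<beta> r) - (\<Sum>r\<in>R. if r = \<rho> then M r t * ln Z else 0)"
      by (simp only: sum_subtractf)
    also have "\<dots> = ln (q t) - ln Z"
      using that assms by simp
    also have "\<dots> = ln (normalize_on T q t)"
      using that \<open>q t > 0\<close> \<open>Z > 0\<close> by (simp add: normalize_on_def ln_div Z_def)
    finally show ?thesis ..
  qed
  then show ?thesis
    using pos_dist_normalize_on[OF assms(1,2,6)] by (auto simp: relational_model_def)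
qed

lemma sum_nonempty_subsets_eq_sum_Fdes:
  assumes "i \<subseteq> features k" "\<forall>V\<in>Fa. \<gamma> V = 0"
  shows "(\<Sum>V\<in>Pow i - {{}}. \<gamma> V) = (\<Sum>W\<in>Fdes k Fa. matA W i * \<gamma> W)"
proof -
  have "finite i"
    using assms(1) by (rule finite_subset) simp
  have "(\<Sum>W\<in>Fdes k Fa. matA W i * \<gamma> W) = (\<Sum>W\<in>{W\<in>Fdes k Fa. W \<subseteq> i}. \<gamma> W)"
    by (simp add: sum_matA)
  also have "\<dots> = (\<Sum>V\<in>Pow i - {{}}. \<gamma> V)"
    using assms \<open>finite i\<close> by (intro sum.mono_neutral_left) (auto simp: Fdes_def)
  finally show ?thesis ..
qed

lemma sum_Pow_eq_sum_rowsA1: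
  assumes "i \<subseteq> features k" "\<forall>V\<in>Fa. \<gamma> V = 0"
  shows "(\<Sum>V\<in>Pow i. \<gamma> V) = (\<Sum>r\<in>rowsA1 k Fa. matA0 r i * case_option (\<gamma> {}) \<gamma> r)"
proof -
  have "(\<Sum>V\<in>Pow i. \<gamma> V) = \<gamma> {} + (\<Sum>V\<in>Pow i - {{}}. \<gamma> V)"
    using finite_subset[OF assms(1)] by (subst sum.remove[of _ "{}"]) auto
  also have "\<dots> = \<gamma> {} + (\<Sum>W\<in>Fdes k Fa. matA0 (Some W) i * \<gamma> W)"
    using assms by (simp add: sum_nonempty_subsets_eq_sum_Fdes matA0_Some Fdes_def)
  finally show ?thesis
    by (simp add: sum_rowsA1 matA0_def[of None])
qed

lemma HAS_eq_relational_model: "HAS k Fa = relational_model (cells k) (rowsA k Fa) matA"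
proof (intro equalityI subsetI)
  fix p assume "p \<in> HAS k Fa"
  then obtain \<beta> where "pos_dist (cells k) p" "\<forall>V\<in>Fa. \<beta> V = 0"
    and "\<forall>i\<in>cells k. ln (p i) = (\<Sum>V\<in>Pow i - {{}}. \<beta> V)"
    by (auto simp: HAS_def)
  then show "p \<in> relational_model (cells k) (rowsA k Fa) matA"
    by (auto simp: relational_model_def rowsA_def cells_def sum_nonempty_subsets_eq_sum_Fdes)
next
  fix p assume "p \<in> relational_model (cells k) (rowsA k Fa) matA"
  then obtain \<beta> where p: "pos_dist (cells k) p"
    and log_linear: "\<forall>i\<in>cells k. ln (p i) = (\<Sum>W\<in>Fdes k Fa. matA W i * \<beta> W)"
    by (auto simp: relational_model_def rowsA_def)
  define \<gamma> where "\<gamma> V = (if V \<in> Fa then 0 else \<beta> V)" for V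
  have "(\<Sum>W\<in>Fdes k Fa. matA W i * \<beta> W) = (\<Sum>V\<in>Pow i - {{}}. \<gamma> V)" if "i \<in> cells k" for i
    using that by (subst sum_nonempty_subsets_eq_sum_Fdes[where Fa = Fa])
      (auto simp: \<gamma>_def cells_def Fdes_def intro!: sum.cong)
  with p log_linear show "p \<in> HAS k Fa"
    unfolding HAS_def by (auto intro!: exI[of _ \<gamma>] simp: \<gamma>_def)
qed

lemma LL_eq_relational_model:
  assumes "{} \<notin> Fa"
  shows "LL k Fa = relational_model (cells0 k) (rowsA1 k Fa) matA0"
proof (intro equalityI subsetI)
  fix p assume "p \<in> LL k Fa"
  then obtain \<beta> where "pos_dist (cells0 k) p" "\<forall>V\<in>Fa. \<beta> V = 0"
    and "\<forall>i\<in>cells0 k. ln (p i) = (\<Sum>V\<in>Pow i. \<beta> V)"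
    by (auto simp: LL_def)
  then show "p \<in> relational_model (cells0 k) (rowsA1 k Fa) matA0"
    unfolding relational_model_def
    by (auto intro!: exI[of _ "case_option (\<beta> {}) \<beta>"] simp: cells0_def sum_Pow_eq_sum_rowsA1)
next
  fix p assume "p \<in> relational_model (cells0 k) (rowsA1 k Fa) matA0"
  then obtain b where p: "pos_dist (cells0 k) p"
    and log_linear: "\<forall>i\<in>cells0 k. ln (p i) = (\<Sum>r\<in>rowsA1 k Fa. matA0 r i * b r)"
    by (auto simp: relational_model_def)
  define \<gamma> where "\<gamma> V = (if V \<in> Fa then 0 else if V = {} then b None else b (Some V))" for V
  have "case_option (\<gamma> {}) \<gamma> r = b r" if "r \<in> rowsA1 k Fa" for r
    using that assms by (auto simp: \<gamma>_def rowsA1_def dest: Fdes_memD)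
  then have "(\<Sum>r\<in>rowsA1 k Fa. matA0 r i * b r) = (\<Sum>V\<in>Pow i. \<gamma> V)" if "i \<in> cells0 k" for i
    using that by (subst sum_Pow_eq_sum_rowsA1[where Fa = Fa]) (auto simp: \<gamma>_def cells0_def)
  with p log_linear show "p \<in> LL k Fa"
    unfolding LL_def by (auto intro!: exI[of _ \<gamma>] simp: \<gamma>_def)
qed

lemma QLL_eq_normalize_on: "QLL k Fa = {normalize_on (cells k) p | p. p \<in> LL k Fa}"
  by (auto simp: QLL_def normalize_on_def fun_eq_iff)

lemma QLL_eq_relational_model:
  assumes "{} \<notin> Fa" "features k \<noteq> {}"
  shows "QLL k Fa = relational_model (cells k) (rowsA1 k Fa) matA1"
proof (intro equalityI subsetI)
  have "cells k \<noteq> {}"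
    using assms(2) by (auto simp: cells_def)
  fix \<pi> assume "\<pi> \<in> QLL k Fa"
  then obtain p \<beta> where \<pi>: "\<pi> = normalize_on (cells k) p" and p: "pos_dist (cells0 k) p"
    and log_linear: "\<forall>t\<in>cells0 k. ln (p t) = (\<Sum>r\<in>rowsA1 k Fa. matA0 r t * \<beta> r)"
    by (auto simp: QLL_eq_normalize_on LL_eq_relational_model[OF assms(1)] relational_model_def)
  have "ln (p t) = (\<Sum>r\<in>rowsA1 k Fa. matA1 r t * \<beta> r)" if "t \<in> cells k" for t
  proof -
    have "t \<in> cells0 k" "t \<noteq> {}"
      using that cells_subset_cells0 by (auto simp: cells_def)
    with log_linear show ?thesis
      by (simp add: matA0_eq_matA1)
  qed
  moreover have "p t > 0" if "t \<in> cells k" for t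
    using that p cells_subset_cells0 by (auto simp: pos_dist_def)
  ultimately show "\<pi> \<in> relational_model (cells k) (rowsA1 k Fa) matA1"
    unfolding \<pi> using \<open>cells k \<noteq> {}\<close>
    by (intro normalize_on_in_relational_model[where \<rho> = None]) (auto simp: rowsA1_def matA1_def)
next
  fix \<pi> assume "\<pi> \<in> relational_model (cells k) (rowsA1 k Fa) matA1"
  then obtain \<beta> where \<pi>: "pos_dist (cells k) \<pi>"
    and log_linear: "\<forall>t\<in>cells k. ln (\<pi> t) = (\<Sum>r\<in>rowsA1 k Fa. matA1 r t * \<beta> r)"
    by (auto simp: relational_model_def)
  define q where "q t = exp (\<Sum>r\<in>rowsA1 k Fa. matA0 r t * \<beta> r)" for t
  have "normalize_on (cells0 k) q \<in> LL k Fa"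
    unfolding LL_eq_relational_model[OF assms(1)]
    by (rule normalize_on_in_relational_model[where \<rho> = None])
      (auto simp: q_def cells0_def rowsA1_def matA0_def)
  moreover have "\<pi> = normalize_on (cells k) (normalize_on (cells0 k) q)"
  proof -
    have "\<pi> = normalize_on (cells k) \<pi>"
      using \<pi> by (simp add: normalize_on_pos_dist)
    also have "\<dots> = normalize_on (cells k) q"
    proof (rule normalize_on_cong)
      fix t assume "t \<in> cells k"
      then have "\<pi> t = exp (ln (\<pi> t))"
        using \<pi> by (simp add: pos_dist_def)
      also have "\<dots> = q t"
        using \<open>t \<in> cells k\<close> log_linear by (simp add: q_def cells_def matA0_eq_matA1)
      finally show "\<pi> t = q t" .
    qed
    also have "\<dots> = normalize_on (cells k) (normalize_on (cells0 k) q)"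
    proof (rule normalize_on_normalize_on[symmetric, OF cells_subset_cells0])
      have "{} \<in> cells0 k"
        by (simp add: cells0_def)
      then show "sum q (cells0 k) \<noteq> 0"
        unfolding q_def by (intro sum_pos[THEN less_imp_neq, symmetric]) auto
    qed
    finally show ?thesis .
  qed
  ultimately show "\<pi> \<in> QLL k Fa"
    by (auto simp: QLL_eq_normalize_on)
qed

theorem theorem5:
  fixes k :: nat and Fa :: "nat set set"
  assumes "ascending_class k Fa"
    and "Fa \<noteq> {}"
    and "{} \<notin> Fa"
  shows "HAS k Fa = relational_model (cells k) (rowsA k Fa) matA \<and>
         QLL k Fa = relational_model (cells k) (rowsA1 k Fa) matA1 \<and>
         LL k Fa = relational_model (cells0 k) (rowsA1 k Fa) matA0 \<and>
         degrees_of_freedom (cells k) (rowsA k Fa) matA = card Fa \<and>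
         degrees_of_freedom (cells0 k) (rowsA1 k Fa) matA0 = card Fa \<and>
         degrees_of_freedom (cells k) (rowsA1 k Fa) matA1 = card Fa - 1"
proof -
  have "features k \<in> Fa"
    using assms(1,2) by (rule features_mem_ascending_class)
  with assms(3) have "features k \<noteq> {}"
    by auto
  have "card Fa + card (Fdes k Fa) + 1 = 2 ^ k"
    using assms(1,3) by (intro card_Fa_add_card_Fdes) (auto simp: ascending_class_def)
  then show ?thesis
    using HAS_eq_relational_model QLL_eq_relational_model[OF assms(3) \<open>features k \<noteq> {}\<close>]
      LL_eq_relational_model[OF assms(3)] mat_rank_matA mat_rank_matA0
      mat_rank_matA1[OF \<open>features k \<in> Fa\<close> assms(3)]
    by (simp add: degrees_of_freedom_def rowsA_def card_cells card_cells0) arith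
qed

end
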